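(* Let $\hat B$ be the bus susceptance matrix of a connected power network with bus set $\mathcal N$, let $\mathcal T \subseteq \mathcal N$, and let $t_1 \neq t_2$ be elements of $\mathcal T$. Let $\sigma_\Gamma^2 > 0$. For $i = 1,2$: let $\theta^{(i)}$ be a random vector in $\mathbb R^{\mathcal N}$ with finite second moments and $\theta^{(i)}_{t_i} = 0$; let $S_i$ be uniformly distributed on $\mathcal T \setminus\{t_i\}$; let $\Gamma_i$ be a real random variable with mean $0$ and variance $\sigma_\Gamma^2$; assume $\theta^{(i)}, S_i, \Gamma_i$ mutually independent; and let $\hat\theta^{(i)}$ be the random vector with $\hat\theta^{(i)}_{t_i} = 0$ and $\hat B\hat\theta^{(i)} = \hat B\theta^{(i)} + \Gamma_i u^{S_i,t_i}$. Define $$\omega = \min\{(v^{s,t}_j)^2 : s,t \in \mathcal T,\ s\ne t,\ j \in \mathcal N,\ v^{s,t}_j \neq 0\},\qquad \lambda = \frac{\sigma_\Gamma^2}{|\mathcal T|-1}\,\omega .$$ Then for every bus $k \in \mathcal N$ there exists $i \in \{1,2\}$ such that the $(k,k)$ entry of the covariance matrix of $\hat\theta^{(i)}$ is at least the $(k,k)$ entry of the covariance matrix of $\theta^{(i)}$ plus $\lambda$, i.e. $\operatorname{Var}(\hat\theta^{(i)}_k) \ge \operatorname{Var}(\theta^{(i)}_k) + \lambda$.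
   Context: DC power flow model: each line $km$ has reactance $x_{km} > 0$, and $\hat B_{kk} = \sum_{km \ni k} 1/x_{km}$, $\hat B_{km} = -1/x_{km}$ for a line $km$, $\hat B_{km} = 0$ otherwise. For distinct buses $s,t$, $u^{s,t}_s = 1$, $u^{s,t}_t = -1$, $u^{s,t}_k = 0$ otherwise, and $v^{s,t}$ is the unique vector with $\hat B v^{s,t} = u^{s,t}$ and $v^{s,t}_t = 0$. *)

theory Defs
  imports "HOL-Probability.Probability"
begin

text \<open>Buses are the elements of a finite type 'n.  The network is given by a symmetric,
irreflexive line relation and reactances x (only their values on lines matter).\<close>

definition Bhat :: "('n::finite \<Rightarrow> 'n \<Rightarrow> bool) \<Rightarrow> ('n \<Rightarrow> 'n \<Rightarrow> real) \<Rightarrow> 'n \<Rightarrow> 'n \<Rightarrow> real" where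
  "Bhat line x k m =
     (if k = m then (\<Sum>j\<in>{j. line k j}. 1 / x k j)
      else if line k m then - 1 / x k m else 0)"

definition uvec :: "'n \<Rightarrow> 'n \<Rightarrow> 'n \<Rightarrow> real" where
  "uvec s t k = (if k = s then 1 else if k = t then -1 else 0)"

definition vvec :: "('n::finite \<Rightarrow> 'n \<Rightarrow> bool) \<Rightarrow> ('n \<Rightarrow> 'n \<Rightarrow> real) \<Rightarrow> 'n \<Rightarrow> 'n \<Rightarrow> 'n \<Rightarrow> real" where
  "vvec line x s t = (THE v. (\<forall>k. (\<Sum>m\<in>UNIV. Bhat line x k m * v m) = uvec s t k) \<and> v t = 0)"

definition omega :: "('n::finite \<Rightarrow> 'n \<Rightarrow> bool) \<Rightarrow> ('n \<Rightarrow> 'n \<Rightarrow> real) \<Rightarrow> 'n set \<Rightarrow> real" where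
  "omega line x T = Min {(vvec line x s t j)^2 | s t j. s \<in> T \<and> t \<in> T \<and> s \<noteq> t \<and> vvec line x s t j \<noteq> 0}"

text \<open>Mutual independence of three random variables with (possibly) different codomains,
 following the definition of indep_vars (independence of the generated preimage sigma algebras).\<close>
definition indep3 :: "'a measure \<Rightarrow> ('a \<Rightarrow> 'b) \<Rightarrow> 'b measure \<Rightarrow> ('a \<Rightarrow> 'c) \<Rightarrow> 'c measure
    \<Rightarrow> ('a \<Rightarrow> 'd) \<Rightarrow> 'd measure \<Rightarrow> bool" where
  "indep3 M X MX Y MY Z MZ \<longleftrightarrow>
     X \<in> measurable M MX \<and> Y \<in> measurable M MY \<and> Z \<in> measurable M MZ \<and>
     prob_space.indep_sets M
       (\<lambda>j::nat. if j = 0 then {X -` A \<inter> space M | A. A \<in> sets MX}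
                else if j = 1 then {Y -` A \<inter> space M | A. A \<in> sets MY}
                else {Z -` A \<inter> space M | A. A \<in> sets MZ}) {0, 1, 2}"

end

(* Multiplication by \hat B is the weighted Laplacian of the connected network, so a maximum
   principle holds: a function that vanishes on a nonempty set of buses and is harmonic elsewhere
   vanishes identically.  Hence \hat B v = b, v_t = 0 has exactly one solution whenever the entries
   of b sum to zero, and the attacked angles are \hat\theta = \theta + \Gamma v^{S,t}.  Independence
   and E \Gamma = 0 give Var(\hat\theta_k) = Var(\theta_k) + \sigma^2 E[(v^{S,t}_k)^2], and for
   uniform S the last expectation is the average of (v^{s,t}_k)^2 over s in T - {t}, which is at
   least \omega / (|T| - 1) as soon as one v^{s,t}_k is nonzero.  Such an s exists for t = t_1 or
   t = t_2: since v^{t_2,t_1} = v^{t_1,t_2}_{t_1} - v^{t_1,t_2}, if v^{t_1,t_2}_k = v^{t_2,t_1}_k = 0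
   then v^{t_1,t_2} vanishes at t_1 and t_2 and is harmonic elsewhere, so it is zero, contradicting
   \hat B v^{t_1,t_2} = u^{t_1,t_2}. *)

theory Submission
  imports Defs
begin

definition Bhat_mulv ::
    "('n::finite \<Rightarrow> 'n \<Rightarrow> bool) \<Rightarrow> ('n \<Rightarrow> 'n \<Rightarrow> real) \<Rightarrow> ('n \<Rightarrow> real) \<Rightarrow> 'n \<Rightarrow> real" where
  "Bhat_mulv line x w r = (\<Sum>m\<in>UNIV. Bhat line x r m * w m)"

lemma Bhat_mulv_add_scaled:
  "Bhat_mulv line x (\<lambda>m. f m + c * g m) r = Bhat_mulv line x f r + c * Bhat_mulv line x g r"
  unfolding Bhat_mulv_def by (simp add: algebra_simps sum.distrib sum_distrib_left)

lemma Bhat_mulv_diff: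
  "Bhat_mulv line x (\<lambda>m. f m - g m) r = Bhat_mulv line x f r - Bhat_mulv line x g r"
  unfolding Bhat_mulv_def by (simp add: algebra_simps sum_subtractf)

lemma Bhat_mulv_minus: "Bhat_mulv line x (\<lambda>m. - f m) r = - Bhat_mulv line x f r"
  unfolding Bhat_mulv_def by (simp add: sum_negf)

lemma sum_uvec:
  fixes s t :: "'n::finite"
  assumes "s \<noteq> t"
  shows "(\<Sum>r\<in>UNIV. uvec s t r) = 0"
proof -
  have "uvec s t r = (if r = s then 1 else 0) - (if r = t then 1 else 0)" for r
    using assms by (simp add: uvec_def)
  then show ?thesis
    by (simp add: sum_subtractf sum.delta)
qed

locale network =
  fixes line :: "'n::finite \<Rightarrow> 'n \<Rightarrow> bool" and x :: "'n \<Rightarrow> 'n \<Rightarrow> real"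
  assumes line_sym: "\<And>a b. line a b \<Longrightarrow> line b a"
    and line_irrefl: "\<And>a. \<not> line a a"
    and x_pos: "\<And>a b. line a b \<Longrightarrow> x a b > 0"
    and x_sym: "\<And>a b. line a b \<Longrightarrow> x a b = x b a"
    and connected: "\<And>a b. (a, b) \<in> {(a, b). line a b}\<^sup>*"
begin

abbreviation B :: "('n \<Rightarrow> real) \<Rightarrow> 'n \<Rightarrow> real" where
  "B \<equiv> Bhat_mulv line x"

lemma Bhat_mulv_eq_sum_lines: "B w r = (\<Sum>j | line r j. (w r - w j) / x r j)"
proof -
  have "Bhat line x r m * w m = (if m = r then (\<Sum>j | line r j. 1 / x r j) * w r else 0)
      + (if line r m then - w m / x r m else 0)" for m
    using line_irrefl by (auto simp: Bhat_def)
  then have "B w r = (\<Sum>j | line r j. 1 / x r j) * w r + (\<Sum>j | line r j. - w j / x r j)"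
    unfolding Bhat_mulv_def by (simp add: sum.distrib sum.inter_filter[symmetric])
  then show ?thesis
    by (simp add: sum_distrib_right sum.distrib[symmetric] diff_divide_distrib)
qed

lemma Bhat_mulv_const: "B (\<lambda>_. c) r = 0"
  by (simp add: Bhat_mulv_eq_sum_lines)

lemma sum_Bhat_mulv: "(\<Sum>r\<in>UNIV. B w r) = 0"
proof -
  have Bhat_sym: "Bhat line x r m = Bhat line x m r" for r m
    unfolding Bhat_def using line_sym x_sym by auto
  have "(\<Sum>r\<in>UNIV. B w r) = (\<Sum>m\<in>UNIV. w m * B (\<lambda>_. 1) m)"
    unfolding Bhat_mulv_def by (subst sum.swap) (simp add: sum_distrib_left Bhat_sym mult.commute)
  then show ?thesis
    by (simp add: Bhat_mulv_const)
qed

lemma max_propagates_along_line: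
  assumes max: "\<And>j. w j \<le> w r" and "B w r \<le> 0" and "line r j"
  shows "w j = w r"
proof -
  have nonneg: "\<And>j. j \<in> {j. line r j} \<Longrightarrow> 0 \<le> (w r - w j) / x r j"
    using max x_pos by (simp add: less_imp_le)
  moreover have "(\<Sum>j | line r j. (w r - w j) / x r j) \<le> 0"
    using \<open>B w r \<le> 0\<close> by (simp add: Bhat_mulv_eq_sum_lines)
  ultimately have "(\<Sum>j | line r j. (w r - w j) / x r j) = 0"
    by (meson antisym sum_nonneg)
  then have "(w r - w j) / x r j = 0"
    using sum_nonneg_eq_0_iff[of "{j. line r j}" "\<lambda>j. (w r - w j) / x r j"] nonneg \<open>line r j\<close>
    by simp
  then show ?thesis
    using x_pos[OF \<open>line r j\<close>] by simp
qed

lemma maximum_principle: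
  assumes "\<And>r. w r = Max (range w) \<Longrightarrow> B w r \<le> 0"
  shows "w a = Max (range w)"
proof -
  have le_max: "w j \<le> Max (range w)" for j
    by (rule Max_ge) auto
  have "Max (range w) \<in> range w"
    by (rule Max_in) auto
  then obtain r where r: "w r = Max (range w)"
    by (metis rangeE)
  from connected[of r a] show ?thesis
  proof (induction rule: rtrancl_induct)
    case base
    then show ?case by (rule r)
  next
    case (step y z)
    then show ?case
      using max_propagates_along_line[of w y z] le_max assms by simp
  qed
qed

lemma harmonic_off_zeros_imp_zero:
  assumes "Z \<noteq> {}" and zero: "\<And>z. z \<in> Z \<Longrightarrow> w z = 0"
    and harmonic: "\<And>r. r \<notin> Z \<Longrightarrow> B w r = 0"
  shows "w = (\<lambda>_. 0)"
proof -
  have nonpos: "u a \<le> 0"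
    if u_zero: "\<And>z. z \<in> Z \<Longrightarrow> u z = 0" and u_harmonic: "\<And>r. r \<notin> Z \<Longrightarrow> B u r = 0" for u a
  proof (rule ccontr)
    assume "\<not> u a \<le> 0"
    moreover have "u a \<le> Max (range u)"
      by (rule Max_ge) auto
    ultimately have pos: "0 < Max (range u)"
      by linarith
    have "B u r \<le> 0" if "u r = Max (range u)" for r
    proof -
      have "r \<notin> Z"
      proof
        assume "r \<in> Z"
        then show False
          using that pos u_zero[of r] by simp
      qed
      then show ?thesis
        using u_harmonic by simp
    qed
    then have max_everywhere: "u z = Max (range u)" for z
      by (rule maximum_principle)
    obtain z where "z \<in> Z"
      using \<open>Z \<noteq> {}\<close> by blast
    then show False
      using u_zero[of z] max_everywhere[of z] pos by linarith
  qed
  have "w a \<le> 0" for a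
    by (rule nonpos) (use zero harmonic in auto)
  moreover have "- w a \<le> 0" for a
    by (rule nonpos[of "\<lambda>m. - w m"]) (use zero harmonic in \<open>auto simp: Bhat_mulv_minus\<close>)
  ultimately show ?thesis
    by (simp add: fun_eq_iff) (meson antisym neg_le_0_iff_le)
qed

lemma Bhat_mulv_eq_imp_eq:
  assumes "\<And>r. B w1 r = B w2 r" and "w1 t = w2 t"
  shows "w1 = w2"
proof -
  have "(\<lambda>m. w1 m - w2 m) = (\<lambda>_. 0)"
    by (rule harmonic_off_zeros_imp_zero[of "{t}"]) (use assms in \<open>auto simp: Bhat_mulv_diff\<close>)
  then show ?thesis
    by (simp add: fun_eq_iff)
qed

lemma Bhat_mulv_solvable:
  assumes "(\<Sum>r\<in>UNIV. b r) = 0"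
  shows "\<exists>v. (\<forall>r. B v r = b r) \<and> v t = 0"
proof -
  \<comment> \<open>Replacing row t of B by the evaluation at t gives an injective, hence surjective, map;
    row t of the system then holds because the columns of B sum to zero.\<close>
  define L :: "real^'n \<Rightarrow> real^'n" where
    "L w = (\<chi> r. if r = t then w$t else B (\<lambda>m. w$m) r)" for w
  have lin: "linear L"
    by (rule linearI) (auto simp: L_def vec_eq_iff Bhat_mulv_def sum.distrib sum_distrib_left algebra_simps)
  have "inj L"
  proof (rule linear_injective_0[OF lin, THEN iffD2], intro allI impI)
    fix w assume "L w = 0"
    then have "(\<lambda>m. w$m) = (\<lambda>_. 0)"
      by (intro harmonic_off_zeros_imp_zero[of "{t}"]) (auto simp: L_def vec_eq_iff split: if_splits)
    then show "w = 0"
      by (simp add: vec_eq_iff fun_eq_iff)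
  qed
  then have "surj L"
    by (rule linear_inj_imp_surj[OF lin])
  then obtain w where w: "L w = (\<chi> r. if r = t then 0 else b r)"
    by (metis surjD)
  define v where "v = (\<lambda>m. w$m)"
  have "(if r = t then v t else B v r) = (if r = t then 0 else b r)" for r
    using arg_cong[OF w, of "\<lambda>u. u $ r"] by (auto simp: L_def v_def split: if_splits)
  then have vt: "v t = 0" and off_t: "\<And>r. r \<noteq> t \<Longrightarrow> B v r = b r"
    by (metis (full_types))+
  have "B v t = - (\<Sum>r\<in>UNIV-{t}. B v r)"
    using sum_Bhat_mulv[of v] sum.remove[of UNIV t "B v"] by simp
  also have "\<dots> = - (\<Sum>r\<in>UNIV-{t}. b r)"
    using off_t by simp
  also have "\<dots> = b t"
    using assms sum.remove[of UNIV t b] by simp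
  finally show ?thesis
    using off_t vt by metis
qed

lemma vvec_eqI:
  assumes "s \<noteq> t" and "\<And>r. B v r = uvec s t r" and "v t = 0"
  shows "vvec line x s t = v"
proof -
  have unique: "\<exists>!v. (\<forall>r. B v r = uvec s t r) \<and> v t = 0"
    using Bhat_mulv_solvable[OF sum_uvec[OF \<open>s \<noteq> t\<close>]] Bhat_mulv_eq_imp_eq by metis
  show ?thesis
    unfolding vvec_def Bhat_mulv_def[symmetric]
    by (rule the1_equality[OF unique]) (use assms in simp)
qed

lemma
  assumes "s \<noteq> t"
  shows Bhat_mulv_vvec: "B (vvec line x s t) r = uvec s t r"
    and vvec_sink: "vvec line x s t t = 0"
proof -
  obtain v where "\<forall>r. B v r = uvec s t r" and "v t = 0"
    using Bhat_mulv_solvable[OF sum_uvec[OF assms]] by blast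
  moreover from this have "vvec line x s t = v"
    by (intro vvec_eqI[OF assms]) auto
  ultimately show "B (vvec line x s t) r = uvec s t r" and "vvec line x s t t = 0"
    by auto
qed

lemma vvec_swap:
  assumes "s \<noteq> t"
  shows "vvec line x t s = (\<lambda>m. vvec line x s t s - vvec line x s t m)"
proof (rule vvec_eqI)
  fix r
  show "B (\<lambda>m. vvec line x s t s - vvec line x s t m) r = uvec t s r"
    using assms by (simp add: Bhat_mulv_diff Bhat_mulv_const Bhat_mulv_vvec uvec_def)
qed (use assms in auto)

lemma vvec_nonzero:
  assumes "s \<noteq> t"
  shows "vvec line x s t k \<noteq> 0 \<or> vvec line x t s k \<noteq> 0"
proof (rule ccontr)
  assume "\<not> ?thesis"
  then have "vvec line x s t k = 0" and "vvec line x t s k = 0"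
    by auto
  then have "vvec line x s t s = 0"
    using vvec_swap[OF assms] by (metis diff_zero)
  then have "vvec line x s t = (\<lambda>_. 0)"
    using assms
    by (intro harmonic_off_zeros_imp_zero[of "{s, t}"]) (auto simp: Bhat_mulv_vvec vvec_sink uvec_def)
  then show False
    using Bhat_mulv_vvec[OF assms, of s] by (simp add: Bhat_mulv_const uvec_def)
qed

lemma perturbed_angles_eq:
  assumes "s \<noteq> t" and "\<And>r. B \<theta>' r = B \<theta> r + \<gamma> * uvec s t r" and "\<theta>' t = 0" and "\<theta> t = 0"
  shows "\<theta>' = (\<lambda>m. \<theta> m + \<gamma> * vvec line x s t m)"
  by (rule Bhat_mulv_eq_imp_eq[where t = t])
    (use assms in \<open>simp_all add: Bhat_mulv_add_scaled Bhat_mulv_vvec vvec_sink\<close>)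

end

lemma vimage_comp_sets_subset:
  assumes X: "X \<in> measurable M MX" and f: "f \<in> measurable MX N"
  shows "{(\<lambda>\<omega>. f (X \<omega>)) -` A \<inter> space M | A. A \<in> sets N} \<subseteq> {X -` B \<inter> space M | B. B \<in> sets MX}"
proof
  fix E assume "E \<in> {(\<lambda>\<omega>. f (X \<omega>)) -` A \<inter> space M | A. A \<in> sets N}"
  then obtain A where A: "A \<in> sets N" and E: "E = (\<lambda>\<omega>. f (X \<omega>)) -` A \<inter> space M"
    by blast
  have "E = X -` (f -` A \<inter> space MX) \<inter> space M"
    using E measurable_space[OF X] by auto
  moreover have "f -` A \<inter> space MX \<in> sets MX"
    using measurable_sets[OF f A] .
  ultimately show "E \<in> {X -` B \<inter> space M | B. B \<in> sets MX}"
    by blast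
qed

lemma (in prob_space) indep3_imp_indep_vars:
  assumes indep: "indep3 M X MX Y MY Z MZ"
    and f: "f \<in> measurable MX N" and g: "g \<in> measurable MY N" and h: "h \<in> measurable MZ N"
  shows "indep_vars (\<lambda>_. N) (\<lambda>j \<omega>. if j = 0 then f (X \<omega>) else if j = 1 then g (Y \<omega>) else h (Z \<omega>))
           {0, 1, 2::nat}"
proof -
  have X: "X \<in> measurable M MX" and Y: "Y \<in> measurable M MY" and Z: "Z \<in> measurable M MZ"
    using indep by (auto simp: indep3_def)
  have sets_indep: "indep_sets (\<lambda>j::nat. if j = 0 then {X -` A \<inter> space M | A. A \<in> sets MX}
      else if j = 1 then {Y -` A \<inter> space M | A. A \<in> sets MY}
      else {Z -` A \<inter> space M | A. A \<in> sets MZ}) {0, 1, 2}"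
    using indep by (simp add: indep3_def)
  show ?thesis
    unfolding indep_vars_def2
  proof (intro conjI ballI)
    fix j :: nat assume "j \<in> {0, 1, 2}"
    then show "random_variable N (\<lambda>\<omega>. if j = 0 then f (X \<omega>) else if j = 1 then g (Y \<omega>) else h (Z \<omega>))"
      using measurable_compose[OF X f] measurable_compose[OF Y g] measurable_compose[OF Z h] by auto
  next
    show "indep_sets (\<lambda>j. {(\<lambda>\<omega>. if j = 0 then f (X \<omega>) else if j = 1 then g (Y \<omega>) else h (Z \<omega>)) -` A
        \<inter> space M | A. A \<in> sets N}) {0, 1, 2::nat}"
      by (rule indep_sets_mono_sets[OF sets_indep])
        (use vimage_comp_sets_subset[OF X f] vimage_comp_sets_subset[OF Y g]
          vimage_comp_sets_subset[OF Z h] in auto)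
  qed
qed

lemma (in prob_space) variance_cong_AE:
  fixes X Y :: "'a \<Rightarrow> real"
  assumes [measurable]: "X \<in> borel_measurable M" "Y \<in> borel_measurable M"
    and eq: "AE \<omega> in M. X \<omega> = Y \<omega>"
  shows "variance X = variance Y"
proof -
  have "expectation X = expectation Y"
    using integral_cong_AE[OF _ _ eq] by simp
  with eq have "AE \<omega> in M. (X \<omega> - expectation X)^2 = (Y \<omega> - expectation Y)^2"
    by auto
  then show ?thesis
    by (rule integral_cong_AE[rotated 2]; measurable)
qed

lemma (in prob_space) variance_add_indep_product:
  fixes F :: "nat \<Rightarrow> 'a \<Rightarrow> real"
  assumes indep: "indep_vars (\<lambda>_. borel) F {0, 1, 2}"
    and square_int: "\<And>i. i \<in> {0, 1, 2} \<Longrightarrow> integrable M (\<lambda>\<omega>. (F i \<omega>)^2)"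
    and mean_zero: "expectation (F 2) = 0"
  shows "variance (\<lambda>\<omega>. F 0 \<omega> + F 1 \<omega> * F 2 \<omega>)
    = variance (F 0) + expectation (\<lambda>\<omega>. (F 1 \<omega>)^2) * expectation (\<lambda>\<omega>. (F 2 \<omega>)^2)"
proof -
  have rv[measurable]: "F i \<in> borel_measurable M" if "i \<in> {0, 1, 2}" for i
    using indep that by (auto simp: indep_vars_def)
  have int: "integrable M (F i)" if "i \<in> {0, 1, 2}" for i
    using square_integrable_imp_integrable[OF rv[OF that] square_int[OF that]] .
  have indep12: "indep_vars (\<lambda>_. borel) F {1, 2}"
    by (rule indep_vars_subset[OF indep]) auto
  have indep_sq: "indep_vars (\<lambda>_. borel) (\<lambda>i \<omega>. (F i \<omega>)^2) {1, 2}"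
    by (rule indep_vars_compose2[OF indep12]) auto
  have int12: "integrable M (\<lambda>\<omega>. F 1 \<omega> * F 2 \<omega>)"
    and E12: "expectation (\<lambda>\<omega>. F 1 \<omega> * F 2 \<omega>) = 0"
    using indep_vars_integrable[OF _ indep12] indep_vars_lebesgue_integral[OF _ indep12] int mean_zero
    by simp_all
  have int012: "integrable M (\<lambda>\<omega>. F 0 \<omega> * (F 1 \<omega> * F 2 \<omega>))"
    and E012: "expectation (\<lambda>\<omega>. F 0 \<omega> * (F 1 \<omega> * F 2 \<omega>)) = 0"
    using indep_vars_integrable[OF _ indep] indep_vars_lebesgue_integral[OF _ indep] int mean_zero
    by simp_all
  have int_sq12: "integrable M (\<lambda>\<omega>. (F 1 \<omega>)^2 * (F 2 \<omega>)^2)"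
    and E_sq12: "expectation (\<lambda>\<omega>. (F 1 \<omega>)^2 * (F 2 \<omega>)^2)
      = expectation (\<lambda>\<omega>. (F 1 \<omega>)^2) * expectation (\<lambda>\<omega>. (F 2 \<omega>)^2)"
    using indep_vars_integrable[OF _ indep_sq] indep_vars_lebesgue_integral[OF _ indep_sq] square_int
    by simp_all
  have square: "(F 0 \<omega> + F 1 \<omega> * F 2 \<omega>)^2
      = (F 0 \<omega>)^2 + 2 * (F 0 \<omega> * (F 1 \<omega> * F 2 \<omega>)) + (F 1 \<omega>)^2 * (F 2 \<omega>)^2" for \<omega>
    by algebra
  have int0: "integrable M (F 0)" and int_sq0: "integrable M (\<lambda>\<omega>. (F 0 \<omega>)^2)"
    using int square_int by auto
  have int_sum: "integrable M (\<lambda>\<omega>. F 0 \<omega> + F 1 \<omega> * F 2 \<omega>)"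
    using int0 int12 by simp
  have int_sum_sq: "integrable M (\<lambda>\<omega>. (F 0 \<omega> + F 1 \<omega> * F 2 \<omega>)^2)"
    unfolding square using int_sq0 int012 int_sq12 by simp
  have "variance (\<lambda>\<omega>. F 0 \<omega> + F 1 \<omega> * F 2 \<omega>)
      = expectation (\<lambda>\<omega>. (F 0 \<omega> + F 1 \<omega> * F 2 \<omega>)^2) - (expectation (\<lambda>\<omega>. F 0 \<omega> + F 1 \<omega> * F 2 \<omega>))^2"
    by (rule variance_eq[OF int_sum int_sum_sq])
  also have "\<dots> = expectation (\<lambda>\<omega>. (F 0 \<omega>)^2) + expectation (\<lambda>\<omega>. (F 1 \<omega>)^2 * (F 2 \<omega>)^2)
      - (expectation (F 0))^2"
    unfolding square using int0 int12 int_sq0 int012 int_sq12 E12 E012 by simp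
  also have "\<dots> = variance (F 0) + expectation (\<lambda>\<omega>. (F 1 \<omega>)^2) * expectation (\<lambda>\<omega>. (F 2 \<omega>)^2)"
    using variance_eq[OF int0 int_sq0] E_sq12 by simp
  finally show ?thesis .
qed

lemma (in prob_space) variance_add_indep3_product:
  fixes Z :: "'a \<Rightarrow> real"
  assumes indep: "indep3 M X MX Y MY Z borel"
    and f: "f \<in> borel_measurable MX" and g: "g \<in> borel_measurable MY"
    and square_int: "integrable M (\<lambda>\<omega>. (f (X \<omega>))^2)" "integrable M (\<lambda>\<omega>. (g (Y \<omega>))^2)"
      "integrable M (\<lambda>\<omega>. (Z \<omega>)^2)"
    and mean_zero: "expectation Z = 0"
  shows "variance (\<lambda>\<omega>. f (X \<omega>) + g (Y \<omega>) * Z \<omega>)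
    = variance (\<lambda>\<omega>. f (X \<omega>)) + expectation (\<lambda>\<omega>. (g (Y \<omega>))^2) * expectation (\<lambda>\<omega>. (Z \<omega>)^2)"
proof -
  define F :: "nat \<Rightarrow> 'a \<Rightarrow> real" where
    "F = (\<lambda>j \<omega>. if j = 0 then f (X \<omega>) else if j = 1 then g (Y \<omega>) else Z \<omega>)"
  have "indep_vars (\<lambda>_. borel) F {0, 1, 2}"
    unfolding F_def by (rule indep3_imp_indep_vars[OF indep f g]) simp
  moreover have "integrable M (\<lambda>\<omega>. (F i \<omega>)^2)" if "i \<in> {0, 1, 2}" for i
    using that square_int by (auto simp: F_def)
  moreover have "expectation (F 2) = 0"
    using mean_zero by (simp add: F_def)
  ultimately show ?thesis
    using variance_add_indep_product[of F] by (simp add: F_def)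
qed

lemma (in prob_space) AE_uniform_mem:
  assumes S[measurable]: "S \<in> measurable M (count_space UNIV)" and A: "finite A" "A \<noteq> {}"
    and uniform: "\<And>s. s \<in> A \<Longrightarrow> prob {\<omega> \<in> space M. S \<omega> = s} = 1 / card A"
  shows "AE \<omega> in M. S \<omega> \<in> A"
proof -
  have events: "{\<omega> \<in> space M. S \<omega> = s} \<in> events" for s
    by measurable
  have "prob {\<omega> \<in> space M. S \<omega> \<in> A} = prob (\<Union>s\<in>A. {\<omega> \<in> space M. S \<omega> = s})"
    by (rule arg_cong[where f = prob]) auto
  also have "\<dots> = (\<Sum>s\<in>A. prob {\<omega> \<in> space M. S \<omega> = s})"
    by (rule finite_measure_finite_Union) (use A events in \<open>auto simp: disjoint_family_on_def\<close>)
  also have "\<dots> = 1"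
    using A uniform by simp
  moreover have "{\<omega> \<in> space M. S \<omega> \<in> A} \<in> events"
    using measurable_sets[OF S, of A] by (simp add: vimage_def Int_def conj_commute)
  ultimately show ?thesis
    by (simp add: prob_Collect_eq_1)
qed

lemma (in prob_space)
  assumes S[measurable]: "S \<in> measurable M (count_space UNIV)" and A: "finite A" "A \<noteq> {}"
    and uniform: "\<And>s. s \<in> A \<Longrightarrow> prob {\<omega> \<in> space M. S \<omega> = s} = 1 / card A"
  shows integrable_uniform: "integrable M (\<lambda>\<omega>. g (S \<omega>))"
    and expectation_uniform: "expectation (\<lambda>\<omega>. g (S \<omega>)) = (\<Sum>s\<in>A. g s) / card A"
proof -
  have events: "{\<omega> \<in> space M. S \<omega> = s} \<in> events" for s
    by measurable
  have g_meas[measurable]: "g \<in> borel_measurable (count_space UNIV)"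
    by simp
  define G where "G \<omega> = (\<Sum>s\<in>A. g s * indicator {\<omega> \<in> space M. S \<omega> = s} \<omega>)" for \<omega>
  have "AE \<omega> in M. S \<omega> \<in> A"
    by (rule AE_uniform_mem[OF S A uniform])
  then have G_eq: "AE \<omega> in M. g (S \<omega>) = G \<omega>"
    using AE_space
  proof eventually_elim
    case (elim \<omega>)
    then have "G \<omega> = (\<Sum>s\<in>A. if s = S \<omega> then g s else 0)"
      unfolding G_def by (intro sum.cong) (auto simp: indicator_def)
    then show ?case
      using elim A by (simp add: sum.delta')
  qed
  have int_G: "integrable M G"
    unfolding G_def using events
    by (intro Bochner_Integration.integrable_sum integrable_mult_right) (simp add: emeasure_eq_measure)
  have G_meas: "G \<in> borel_measurable M"
    using int_G by (rule borel_measurable_integrable)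
  show "integrable M (\<lambda>\<omega>. g (S \<omega>))"
    using integrable_cong_AE[OF _ G_meas G_eq] int_G by simp
  have "expectation (\<lambda>\<omega>. g (S \<omega>)) = expectation G"
    using integral_cong_AE[OF _ G_meas G_eq] by simp
  also have "\<dots> = (\<Sum>s\<in>A. g s * prob {\<omega> \<in> space M. S \<omega> = s})"
    unfolding G_def using events by (simp add: emeasure_eq_measure Int_absorb2 subset_iff)
  also have "\<dots> = (\<Sum>s\<in>A. g s) / card A"
    using uniform by (simp add: sum_divide_distrib)
  finally show "expectation (\<lambda>\<omega>. g (S \<omega>)) = (\<Sum>s\<in>A. g s) / card A" .
qed

lemma omega_le:
  fixes line :: "'n::finite \<Rightarrow> 'n \<Rightarrow> bool"
  assumes "s \<in> T" "t \<in> T" "s \<noteq> t" "vvec line x s t j \<noteq> 0"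
  shows "omega line x T \<le> (vvec line x s t j)^2"
proof -
  have "{(vvec line x s t j)^2 | s t j. s \<in> T \<and> t \<in> T \<and> s \<noteq> t \<and> vvec line x s t j \<noteq> 0}
      \<subseteq> range (\<lambda>(s, t, j). (vvec line x s t j)^2)"
    by (auto simp: image_iff) blast
  then have "finite {(vvec line x s t j)^2 | s t j. s \<in> T \<and> t \<in> T \<and> s \<noteq> t \<and> vvec line x s t j \<noteq> 0}"
    by (rule finite_subset) simp
  then show ?thesis
    unfolding omega_def by (rule Min_le) (use assms in blast)
qed

lemma (in network) variance_perturbed_angle:
  fixes M :: "'a measure" and \<theta> \<theta>' :: "'a \<Rightarrow> 'n \<Rightarrow> real" and S :: "'a \<Rightarrow> 'n"
    and \<Gamma> :: "'a \<Rightarrow> real"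
  assumes "prob_space M" and "t \<in> T" and "card T \<ge> 2"
    and \<theta>_sq: "integrable M (\<lambda>\<omega>. (\<theta> \<omega> k)^2)"
    and \<theta>_t: "AE \<omega> in M. \<theta> \<omega> t = 0"
    and S_unif: "\<And>s. s \<in> T - {t} \<Longrightarrow> measure M {\<omega> \<in> space M. S \<omega> = s} = 1 / real (card T - 1)"
    and \<Gamma>_sq: "integrable M (\<lambda>\<omega>. (\<Gamma> \<omega>)^2)"
    and \<Gamma>_mean: "prob_space.expectation M \<Gamma> = 0"
    and indep: "indep3 M \<theta> (Pi\<^sub>M UNIV (\<lambda>_. borel)) S (count_space UNIV) \<Gamma> borel"
    and \<theta>'_meas: "\<theta>' \<in> measurable M (Pi\<^sub>M UNIV (\<lambda>_. borel))"
    and \<theta>'_t: "AE \<omega> in M. \<theta>' \<omega> t = 0"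
    and \<theta>'_eq: "AE \<omega> in M. \<forall>r. B (\<theta>' \<omega>) r = B (\<theta> \<omega>) r + \<Gamma> \<omega> * uvec (S \<omega>) t r"
  shows "prob_space.variance M (\<lambda>\<omega>. \<theta>' \<omega> k) = prob_space.variance M (\<lambda>\<omega>. \<theta> \<omega> k)
    + prob_space.variance M \<Gamma> * (\<Sum>s\<in>T - {t}. (vvec line x s t k)^2) / (real (card T) - 1)"
proof -
  interpret prob_space M by fact
  have [measurable]: "\<theta> \<in> measurable M (Pi\<^sub>M UNIV (\<lambda>_. borel))" "\<Gamma> \<in> borel_measurable M"
    and S_meas[measurable]: "S \<in> measurable M (count_space UNIV)"
    using indep by (auto simp: indep3_def)
  note [measurable] = \<theta>'_meas
  define A where "A = T - {t}"
  have card_A: "card A = card T - 1"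
    using \<open>t \<in> T\<close> by (simp add: A_def card_Diff_singleton)
  then have "A \<noteq> {}" and real_card_A: "real (card A) = real (card T) - 1"
    using \<open>card T \<ge> 2\<close> by (auto simp: of_nat_diff)
  have S_uniform: "\<And>s. s \<in> A \<Longrightarrow> prob {\<omega> \<in> space M. S \<omega> = s} = 1 / card A"
    using S_unif card_A by (simp add: A_def)
  have "finite A"
    by simp
  have S_in_A: "AE \<omega> in M. S \<omega> \<in> A"
    by (rule AE_uniform_mem[OF S_meas \<open>finite A\<close> \<open>A \<noteq> {}\<close> S_uniform])
  have "AE \<omega> in M. \<theta>' \<omega> k = \<theta> \<omega> k + vvec line x (S \<omega>) t k * \<Gamma> \<omega>"
    using S_in_A \<theta>_t \<theta>'_t \<theta>'_eq
  proof eventually_elim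
    case (elim \<omega>)
    then have "\<theta>' \<omega> = (\<lambda>m. \<theta> \<omega> m + \<Gamma> \<omega> * vvec line x (S \<omega>) t m)"
      by (intro perturbed_angles_eq) (auto simp: A_def)
    then show ?case
      by simp
  qed
  then have "variance (\<lambda>\<omega>. \<theta>' \<omega> k)
      = variance (\<lambda>\<omega>. \<theta> \<omega> k + vvec line x (S \<omega>) t k * \<Gamma> \<omega>)"
    by (rule variance_cong_AE[rotated 2]) measurable
  also have "\<dots> = variance (\<lambda>\<omega>. \<theta> \<omega> k)
      + expectation (\<lambda>\<omega>. (vvec line x (S \<omega>) t k)^2) * expectation (\<lambda>\<omega>. (\<Gamma> \<omega>)^2)"
    using integrable_uniform[OF S_meas \<open>finite A\<close> \<open>A \<noteq> {}\<close> S_uniform] \<theta>_sq \<Gamma>_sq \<Gamma>_mean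
    by (intro variance_add_indep3_product[OF indep, where f = "\<lambda>\<theta>. \<theta> k"]) auto
  also have "expectation (\<lambda>\<omega>. (vvec line x (S \<omega>) t k)^2) = (\<Sum>s\<in>T - {t}. (vvec line x s t k)^2) / card A"
    using expectation_uniform[OF S_meas \<open>finite A\<close> \<open>A \<noteq> {}\<close> S_uniform] by (simp add: A_def)
  also have "expectation (\<lambda>\<omega>. (\<Gamma> \<omega>)^2) = variance \<Gamma>"
    using \<Gamma>_mean by simp
  finally show ?thesis
    by (simp add: real_card_A)
qed

theorem lemma9:
  fixes line :: "'n::finite \<Rightarrow> 'n \<Rightarrow> bool"
    and x :: "'n \<Rightarrow> 'n \<Rightarrow> real"
    and T :: "'n set" and t :: "nat \<Rightarrow> 'n" and sigma2 :: real
    and M :: "nat \<Rightarrow> 'a measure"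
    and \<theta> \<theta>hat :: "nat \<Rightarrow> 'a \<Rightarrow> 'n \<Rightarrow> real"
    and S :: "nat \<Rightarrow> 'a \<Rightarrow> 'n" and \<Gamma> :: "nat \<Rightarrow> 'a \<Rightarrow> real"
    and k :: 'n
  assumes line_sym: "\<And>a b. line a b \<Longrightarrow> line b a"
    and line_irrefl: "\<And>a. \<not> line a a"
    and x_pos: "\<And>a b. line a b \<Longrightarrow> x a b > 0"
    and x_sym: "\<And>a b. line a b \<Longrightarrow> x a b = x b a"
    and connected: "\<And>a b. (a, b) \<in> {(a, b). line a b}\<^sup>*"
    and t_in: "t 1 \<in> T" "t 2 \<in> T" and t_ne: "t 1 \<noteq> t 2"
    and sigma_pos: "sigma2 > 0"
    and prob: "\<And>i. i \<in> {1, 2} \<Longrightarrow> prob_space (M i)"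
    and \<theta>_sq: "\<And>i j. i \<in> {1, 2} \<Longrightarrow> integrable (M i) (\<lambda>\<omega>. (\<theta> i \<omega> j)^2)"
    and \<theta>_t: "\<And>i. i \<in> {1, 2} \<Longrightarrow> AE \<omega> in M i. \<theta> i \<omega> (t i) = 0"
    and S_meas: "\<And>i. i \<in> {1, 2} \<Longrightarrow> S i \<in> measurable (M i) (count_space UNIV)"
    and S_unif: "\<And>i s. i \<in> {1, 2} \<Longrightarrow> s \<in> T - {t i} \<Longrightarrow>
        measure (M i) {\<omega> \<in> space (M i). S i \<omega> = s} = 1 / real (card T - 1)"
    and \<Gamma>_meas: "\<And>i. i \<in> {1, 2} \<Longrightarrow> \<Gamma> i \<in> borel_measurable (M i)"
    and \<Gamma>_sq: "\<And>i. i \<in> {1, 2} \<Longrightarrow> integrable (M i) (\<lambda>\<omega>. (\<Gamma> i \<omega>)^2)"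
    and \<Gamma>_mean: "\<And>i. i \<in> {1, 2} \<Longrightarrow> prob_space.expectation (M i) (\<Gamma> i) = 0"
    and \<Gamma>_var: "\<And>i. i \<in> {1, 2} \<Longrightarrow> prob_space.variance (M i) (\<Gamma> i) = sigma2"
    and indep: "\<And>i. i \<in> {1, 2} \<Longrightarrow>
        indep3 (M i) (\<theta> i) (Pi\<^sub>M UNIV (\<lambda>_. borel)) (S i) (count_space UNIV) (\<Gamma> i) borel"
    and \<theta>hat_meas: "\<And>i. i \<in> {1, 2} \<Longrightarrow> \<theta>hat i \<in> measurable (M i) (Pi\<^sub>M UNIV (\<lambda>_. borel))"
    and \<theta>hat_t: "\<And>i. i \<in> {1, 2} \<Longrightarrow> AE \<omega> in M i. \<theta>hat i \<omega> (t i) = 0"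
    and \<theta>hat_eq: "\<And>i. i \<in> {1, 2} \<Longrightarrow> AE \<omega> in M i. \<forall>r.
        (\<Sum>m\<in>UNIV. Bhat line x r m * \<theta>hat i \<omega> m)
          = (\<Sum>m\<in>UNIV. Bhat line x r m * \<theta> i \<omega> m) + \<Gamma> i \<omega> * uvec (S i \<omega>) (t i) r"
  shows "\<exists>i\<in>{1, 2}. prob_space.variance (M i) (\<lambda>\<omega>. \<theta>hat i \<omega> k)
           \<ge> prob_space.variance (M i) (\<lambda>\<omega>. \<theta> i \<omega> k)
             + sigma2 / (real (card T) - 1) * omega line x T"
proof -
  interpret network line x
    by unfold_locales (use line_sym line_irrefl x_pos x_sym connected in auto)
  have "card {t 1, t 2} \<le> card T"
    using t_in by (intro card_mono) auto
  then have card_T: "card T \<ge> 2"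
    using t_ne by simp
  obtain i s where i: "i \<in> {1, 2}" and s: "s \<in> T - {t i}" and nonzero: "vvec line x s (t i) k \<noteq> 0"
    using vvec_nonzero[OF t_ne, of k] t_in t_ne by (metis DiffI insertCI singletonD)
  have t_i: "t i \<in> T"
    using i t_in by auto
  have "omega line x T \<le> (vvec line x s (t i) k)^2"
    using s t_i nonzero by (intro omega_le) auto
  also have "\<dots> \<le> (\<Sum>s\<in>T - {t i}. (vvec line x s (t i) k)^2)"
    using s by (intro member_le_sum) auto
  finally have "sigma2 / (real (card T) - 1) * omega line x T
      \<le> sigma2 / (real (card T) - 1) * (\<Sum>s\<in>T - {t i}. (vvec line x s (t i) k)^2)"
    using sigma_pos card_T by (intro mult_left_mono) auto
  moreover have "prob_space.variance (M i) (\<lambda>\<omega>. \<theta>hat i \<omega> k) = prob_space.variance (M i) (\<lambda>\<omega>. \<theta> i \<omega> k)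
      + sigma2 * (\<Sum>s\<in>T - {t i}. (vvec line x s (t i) k)^2) / (real (card T) - 1)"
    using variance_perturbed_angle[OF prob[OF i] t_i card_T \<theta>_sq[OF i] \<theta>_t[OF i] S_unif[OF i]
        \<Gamma>_sq[OF i] \<Gamma>_mean[OF i] indep[OF i] \<theta>hat_meas[OF i] \<theta>hat_t[OF i]
        \<theta>hat_eq[OF i, folded Bhat_mulv_def]]
    by (simp add: \<Gamma>_var[OF i])
  ultimately show ?thesis
    using i by auto
qed

end
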